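(* Let $(M,\star)$ be a Banach algebra and $e\in M$ a right identity (i.e. $\mu\star e=\mu$ for all $\mu\in M$). Then $Z_t((e\star M)'')=Z_t(M'')\cap(e\star M)''$.
   Context: Left Arens product on $M''$: for $h\in M'$, $\mu,\nu\in M$, $\mathbf m,\mathbf n\in M''$, $\langle h\cdot\mu,\nu\rangle=\langle h,\mu\star\nu\rangle$, $\langle\mathbf n\odot h,\mu\rangle=\langle\mathbf n,h\cdot\mu\rangle$, $\langle\mathbf m\square\mathbf n,h\rangle=\langle\mathbf m,\mathbf n\odot h\rangle$. (Left) topological centre: $Z_t(M'')=\{\mathbf m\in M'':\ \mathbf n\mapsto\mathbf m\square\mathbf n\text{ is weak}^*\text{-continuous on }M''\}$. $e\star M=\{e\star\mu:\mu\in M\}$ is a closed subalgebra; its bidual $(e\star M)''$ is identified with its weak$^*$-closure in $M''$, on which the Arens product of $M''$ restricts to that of $(e\star M)''$, and $Z_t((e\star M)'')$ is the topological centre of the Banach algebra $e\star M$. *)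

theory Defs
  imports "HOL-Analysis.Analysis"
begin

text \<open>Dual M' = bounded linear functionals 'a \<Rightarrow>L real; bidual M'' = ('a \<Rightarrow>L real) \<Rightarrow>L real.\<close>

definition dual_act :: "('a::real_normed_algebra \<Rightarrow>\<^sub>L real) \<Rightarrow> 'a \<Rightarrow> ('a \<Rightarrow>\<^sub>L real)" where
  "dual_act h \<mu> = Blinfun (\<lambda>\<nu>. blinfun_apply h (\<mu> * \<nu>))"

definition bidual_act :: "(('a::real_normed_algebra \<Rightarrow>\<^sub>L real) \<Rightarrow>\<^sub>L real) \<Rightarrow> ('a \<Rightarrow>\<^sub>L real) \<Rightarrow> ('a \<Rightarrow>\<^sub>L real)" where
  "bidual_act n h = Blinfun (\<lambda>\<mu>. blinfun_apply n (dual_act h \<mu>))"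

definition arens :: "(('a::real_normed_algebra \<Rightarrow>\<^sub>L real) \<Rightarrow>\<^sub>L real) \<Rightarrow> (('a \<Rightarrow>\<^sub>L real) \<Rightarrow>\<^sub>L real) \<Rightarrow> (('a \<Rightarrow>\<^sub>L real) \<Rightarrow>\<^sub>L real)" where
  "arens m n = Blinfun (\<lambda>h. blinfun_apply m (bidual_act n h))"

definition wstar :: "(('a::real_normed_vector \<Rightarrow>\<^sub>L real) \<Rightarrow>\<^sub>L real) topology" where
  "wstar = topology_generated_by {{n. blinfun_apply n h \<in> U} | h U. open U}"

definition kappa :: "'a::real_normed_vector \<Rightarrow> (('a \<Rightarrow>\<^sub>L real) \<Rightarrow>\<^sub>L real)" where
  "kappa \<mu> = Blinfun (\<lambda>h. blinfun_apply h \<mu>)"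

text \<open>Bidual of the closed subalgebra e*M, identified with the weak*-closure of its canonical
  image in M''.\<close>
definition sub_bidual :: "'a::real_normed_algebra \<Rightarrow> (('a \<Rightarrow>\<^sub>L real) \<Rightarrow>\<^sub>L real) set" where
  "sub_bidual e = wstar closure_of (kappa ` ((\<lambda>\<mu>. e * \<mu>) ` UNIV))"

text \<open>Topological centre of a weak*-closed subalgebra S of M'' (with Arens product restricted to S
  and the relative weak* topology).  topcentre UNIV is Z_t(M'').\<close>
definition topcentre :: "(('a::real_normed_algebra \<Rightarrow>\<^sub>L real) \<Rightarrow>\<^sub>L real) set \<Rightarrow> (('a \<Rightarrow>\<^sub>L real) \<Rightarrow>\<^sub>L real) set" where
  "topcentre S = {m \<in> S. continuous_map (subtopology wstar S) (subtopology wstar S) (\<lambda>n. arens m n)}"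

end

theory Submission
  imports Defs
begin

text \<open>Let P n = kappa e [] n, so that (P n)(h) = n(h . e). By Helly's lemma a functional in M''
  agrees with some kappa mu on any finite set of functionals; hence P n agrees on every finite set
  with some kappa (e * mu), i.e. P maps M'' into the weak*-closure (e * M)'' of kappa (e * M), and P
  is weak*-continuous. Since e is a right identity, m [] P n = m [] n. So if m [] - is weak*-continuous
  on (e * M)'', then m [] - = (m [] -) o P is weak*-continuous on M''. Conversely, (e * M)'' is a
  weak*-closed subalgebra of M'', so continuity of m [] - on M'' restricts to it.\<close>

lemma dual_act_apply [simp]: "blinfun_apply (dual_act h \<mu>) \<nu> = blinfun_apply h (\<mu> * \<nu>)"
  unfolding dual_act_def
  by (simp add: bounded_linear_Blinfun_apply
      bounded_linear_compose[OF blinfun.bounded_linear_right bounded_linear_mult_right])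

lemma dual_act_eq_compose: "dual_act h \<mu> = h o\<^sub>L blinfun_mult_right \<mu>"
  by (rule blinfun_eqI) simp

lemma bounded_bilinear_dual_act: "bounded_bilinear dual_act"
  unfolding dual_act_eq_compose[abs_def]
  by (rule bounded_bilinear.comp[OF bounded_bilinear_blinfun_compose bounded_linear_ident
        bounded_linear_blinfun_mult_right])

lemma bidual_act_apply [simp]: "blinfun_apply (bidual_act n h) \<mu> = blinfun_apply n (dual_act h \<mu>)"
  unfolding bidual_act_def
  by (simp add: bounded_linear_Blinfun_apply bounded_linear_compose[OF blinfun.bounded_linear_right
        bounded_bilinear.bounded_linear_right[OF bounded_bilinear_dual_act]])

lemma bidual_act_eq_compose: "bidual_act n h = n o\<^sub>L bounded_bilinear.prod_right dual_act h"
  by (rule blinfun_eqI) (simp add: bounded_bilinear.prod_right.rep_eq[OF bounded_bilinear_dual_act])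

lemma bounded_linear_bidual_act: "bounded_linear (bidual_act n)"
  unfolding bidual_act_eq_compose[abs_def]
  by (rule bounded_linear_compose
      [OF bounded_bilinear.bounded_linear_right[OF bounded_bilinear_blinfun_compose]
        bounded_bilinear.bounded_linear_prod_right[OF bounded_bilinear_dual_act]])

lemma arens_apply [simp]: "blinfun_apply (arens m n) h = blinfun_apply m (bidual_act n h)"
  unfolding arens_def
  by (simp add: bounded_linear_Blinfun_apply
      bounded_linear_compose[OF blinfun.bounded_linear_right bounded_linear_bidual_act])

lemma kappa_apply [simp]: "blinfun_apply (kappa \<mu>) h = blinfun_apply h \<mu>"
  unfolding kappa_def by (simp add: bounded_linear_Blinfun_apply blinfun.bounded_linear_left)

lemma arens_kappa_kappa: "arens (kappa \<mu>) (kappa \<nu>) = kappa (\<mu> * \<nu>)"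
  by (rule blinfun_eqI) simp

lemma arens_kappa_right_identity:
  assumes "\<forall>\<mu>. \<mu> * e = \<mu>"
  shows "arens m (arens (kappa e) n) = arens m n"
proof -
  have "dual_act (dual_act h \<mu>) e = dual_act h \<mu>" for h \<mu>
    by (rule blinfun_eqI) (simp add: mult.assoc[symmetric] assms)
  then have "bidual_act (arens (kappa e) n) h = bidual_act n h" for h
    by (intro blinfun_eqI) simp
  then show ?thesis
    by (intro blinfun_eqI) simp
qed

lemma wstar_topspace [simp]: "topspace wstar = UNIV"
  unfolding wstar_def topology_generated_by_topspace by blast

lemma openin_wstar_evaluation_preimage:
  "open U \<Longrightarrow> openin wstar {n. blinfun_apply n h \<in> U}"
  unfolding wstar_def by (blast intro: topology_generated_by_Basis)

lemma continuous_map_wstar_evaluation: "continuous_map wstar euclidean (\<lambda>n. blinfun_apply n h)"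
  by (simp add: continuous_map openin_wstar_evaluation_preimage)

lemma continuous_map_into_wstar:
  fixes f :: "'x \<Rightarrow> ('a::real_normed_vector \<Rightarrow>\<^sub>L real) \<Rightarrow>\<^sub>L real"
  assumes "\<And>h. continuous_map X euclidean (\<lambda>x. blinfun_apply (f x) h)"
  shows "continuous_map X wstar f"
  unfolding wstar_def
proof (rule continuous_on_generated_topo)
  fix V :: "(('a \<Rightarrow>\<^sub>L real) \<Rightarrow>\<^sub>L real) set"
  assume "V \<in> {{n. blinfun_apply n h \<in> U} | h U. open U}"
  then obtain h U where V: "V = {n. blinfun_apply n h \<in> U}" and "open U"
    by blast
  then have "openin X {x \<in> topspace X. blinfun_apply (f x) h \<in> U}"
    using assms[of h] by (simp add: continuous_map_def)
  then show "openin X (f -` V \<inter> topspace X)"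
    by (simp add: V vimage_def Int_def conj_commute)
next
  show "f ` topspace X \<subseteq> \<Union>{{n. blinfun_apply n h \<in> U} | h U. open U}"
    using wstar_topspace unfolding wstar_def topology_generated_by_topspace by (rule ssubst) simp
qed

lemma continuous_map_wstar_transpose:
  assumes "\<And>n h. blinfun_apply (f n) h = blinfun_apply n (g h)"
  shows "continuous_map wstar wstar f"
  by (rule continuous_map_into_wstar) (simp add: assms continuous_map_wstar_evaluation)

lemma openin_wstar_contains_agreement_set:
  assumes "openin wstar T" and "x \<in> T"
  obtains F where "finite F" and "{n. \<forall>h\<in>F. blinfun_apply n h = blinfun_apply x h} \<subseteq> T"
proof -
  have "generate_topology_on {{n. blinfun_apply n h \<in> U} | h U. open U} T"
    using assms(1) unfolding wstar_def by (rule openin_topology_generated_by)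
  then have "\<exists>F. finite F \<and> {n. \<forall>h\<in>F. blinfun_apply n h = blinfun_apply x h} \<subseteq> T"
    using assms(2)
  proof induction
    case (Int S S')
    then obtain F F' where "finite F" "{n. \<forall>h\<in>F. blinfun_apply n h = blinfun_apply x h} \<subseteq> S"
      and "finite F'" "{n. \<forall>h\<in>F'. blinfun_apply n h = blinfun_apply x h} \<subseteq> S'"
      by (meson IntD1 IntD2)
    then show ?case
      by (intro exI[of _ "F \<union> F'"]) auto
  next
    case (UN K)
    then show ?case
      by (meson UnionE Union_upper subset_trans)
  next
    case (Basis S)
    then obtain h U where "S = {n. blinfun_apply n h \<in> U}"
      by blast
    with Basis.prems show ?case
      by (intro exI[of _ "{h}"]) auto
  qed simp
  with that show ?thesis
    by blast
qed

lemma in_span_if_common_kernel_annihilates: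
  fixes F :: "('a::real_normed_vector \<Rightarrow>\<^sub>L real) set"
  assumes "finite F" and "\<And>x. (\<forall>f\<in>F. blinfun_apply f x = 0) \<Longrightarrow> blinfun_apply g x = 0"
  shows "g \<in> span F"
  using assms
proof (induction F arbitrary: g rule: finite_induct)
  case empty
  then have "g = 0"
    by (intro blinfun_eqI) simp
  then show ?case
    by simp
next
  case (insert f F)
  show ?case
  proof (cases "\<forall>x. (\<forall>f'\<in>F. blinfun_apply f' x = 0) \<longrightarrow> blinfun_apply f x = 0")
    case True
    then have "g \<in> span F"
      using insert.prems by (intro insert.IH) auto
    then show ?thesis
      by (meson span_mono subset_insertI subsetD)
  next
    case False
    then obtain x0 where x0: "\<forall>f'\<in>F. blinfun_apply f' x0 = 0" "blinfun_apply f x0 \<noteq> 0"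
      by blast
    define c where "c = blinfun_apply g x0 / blinfun_apply f x0"
    have "g - c *\<^sub>R f \<in> span F"
    proof (rule insert.IH)
      fix x
      assume x: "\<forall>f'\<in>F. blinfun_apply f' x = 0"
      define y where "y = x - (blinfun_apply f x / blinfun_apply f x0) *\<^sub>R x0"
      have "\<forall>f'\<in>insert f F. blinfun_apply f' y = 0"
        using x x0 by (auto simp: y_def blinfun.diff_right blinfun.scaleR_right)
      then have "blinfun_apply g y = 0"
        using insert.prems by blast
      then show "blinfun_apply (g - c *\<^sub>R f) x = 0"
        using x0(2) by (simp add: y_def c_def blinfun.diff_right blinfun.scaleR_right
            blinfun.diff_left blinfun.scaleR_left field_simps)
    qed
    then have "g - c *\<^sub>R f + c *\<^sub>R f \<in> span (insert f F)"
      by (meson span_add span_base span_mono span_scale insertI1 subset_insertI subsetD)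
    then show ?thesis
      by simp
  qed
qed

lemma bidual_agrees_with_kappa_on_finite:
  fixes F :: "('a::real_normed_vector \<Rightarrow>\<^sub>L real) set"
  assumes "finite F"
  obtains \<mu> where "\<And>g. g \<in> F \<Longrightarrow> blinfun_apply (kappa \<mu>) g = blinfun_apply n g"
proof -
  have "\<exists>\<mu>. \<forall>g\<in>F. blinfun_apply g \<mu> = blinfun_apply n g"
    using assms
  proof (induction F rule: finite_induct)
    case (insert g F)
    then obtain \<mu> where \<mu>: "\<forall>f\<in>F. blinfun_apply f \<mu> = blinfun_apply n f"
      by blast
    show ?case
    proof (cases "\<exists>x. (\<forall>f\<in>F. blinfun_apply f x = 0) \<and> blinfun_apply g x \<noteq> 0")
      case True
      then obtain x where x: "\<forall>f\<in>F. blinfun_apply f x = 0" "blinfun_apply g x \<noteq> 0"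
        by blast
      define \<mu>' where "\<mu>' = \<mu> + ((blinfun_apply n g - blinfun_apply g \<mu>) / blinfun_apply g x) *\<^sub>R x"
      have "\<forall>f\<in>insert g F. blinfun_apply f \<mu>' = blinfun_apply n f"
        using \<mu> x by (auto simp: \<mu>'_def blinfun.add_right blinfun.scaleR_right)
      then show ?thesis
        by blast
    next
      case False
      then have "g \<in> span F"
        using in_span_if_common_kernel_annihilates[OF insert.hyps(1)] by blast
      moreover have "linear (\<lambda>f. blinfun_apply f \<mu>)" "linear (blinfun_apply n)"
        by (simp_all add: bounded_linear.linear blinfun.bounded_linear_left blinfun.bounded_linear_right)
      ultimately have "blinfun_apply g \<mu> = blinfun_apply n g"
        using \<mu> real_vector.linear_eq_on_span by blast
      then show ?thesis
        using \<mu> by auto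
    qed
  qed simp
  with that show ?thesis
    by auto
qed

lemma closure_of_invariant:
  assumes "continuous_map X X f" and "f ` S \<subseteq> X closure_of S"
  shows "f ` (X closure_of S) \<subseteq> X closure_of S"
  using continuous_map_image_closure_subset[OF assms(1), of S] closure_of_mono[OF assms(2), of X]
  by simp

lemma continuous_map_arens_kappa_left: "continuous_map wstar wstar (arens (kappa \<mu>))"
  by (rule continuous_map_wstar_transpose[where g = "\<lambda>h. dual_act h \<mu>"]) simp

lemma continuous_map_arens_right: "continuous_map wstar wstar (\<lambda>m. arens m n)"
  by (rule continuous_map_wstar_transpose[where g = "bidual_act n"]) simp

lemma arens_kappa_in_sub_bidual: "arens (kappa e) n \<in> sub_bidual e"
  unfolding sub_bidual_def in_closure_of
proof (intro conjI allI impI)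
  fix T
  assume "arens (kappa e) n \<in> T \<and> openin wstar T"
  then have "openin wstar T" and "arens (kappa e) n \<in> T"
    by simp_all
  then obtain F where "finite F"
    and F: "{m. \<forall>h\<in>F. blinfun_apply m h = blinfun_apply (arens (kappa e) n) h} \<subseteq> T"
    by (rule openin_wstar_contains_agreement_set)
  obtain \<mu> where \<mu>: "\<And>g. g \<in> (\<lambda>h. dual_act h e) ` F \<Longrightarrow> blinfun_apply (kappa \<mu>) g = blinfun_apply n g"
    using finite_imageI[OF \<open>finite F\<close>, of "\<lambda>h. dual_act h e"]
    by (rule bidual_agrees_with_kappa_on_finite[where n = n]) blast
  have "blinfun_apply (kappa (e * \<mu>)) h = blinfun_apply (arens (kappa e) n) h" if "h \<in> F" for h
    using \<mu>[of "dual_act h e"] that by simp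
  then have "kappa (e * \<mu>) \<in> T"
    by (intro subsetD[OF F]) simp
  then show "\<exists>y. y \<in> kappa ` range ((*) e) \<and> y \<in> T"
    by blast
qed simp

lemma arens_sub_bidual_closed:
  assumes "m \<in> sub_bidual e" and "n \<in> sub_bidual e"
  shows "arens m n \<in> sub_bidual e"
proof -
  let ?A = "kappa ` range ((*) e)"
  have "arens (kappa (e * \<mu>)) ` ?A \<subseteq> ?A" for \<mu>
    by (auto simp: arens_kappa_kappa mult.assoc)
  then have "arens (kappa (e * \<mu>)) ` sub_bidual e \<subseteq> sub_bidual e" for \<mu>
    unfolding sub_bidual_def
    by (intro closure_of_invariant continuous_map_arens_kappa_left order_trans[OF _ closure_of_subset])
      simp_all
  then have "(\<lambda>m. arens m n) ` ?A \<subseteq> sub_bidual e"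
    using assms(2) by blast
  then have "(\<lambda>m. arens m n) ` sub_bidual e \<subseteq> sub_bidual e"
    unfolding sub_bidual_def by (rule closure_of_invariant[OF continuous_map_arens_right])
  then show ?thesis
    using assms(1) by blast
qed

lemma topcentre_UNIV: "topcentre UNIV = {m. continuous_map wstar wstar (arens m)}"
proof -
  have "subtopology wstar UNIV = wstar"
    using subtopology_topspace[of wstar] by simp
  then show ?thesis
    unfolding topcentre_def by simp
qed

lemma topcentre_sub_bidual_subset:
  assumes "\<forall>\<mu>. \<mu> * e = \<mu>"
  shows "topcentre (sub_bidual e) \<subseteq> topcentre UNIV \<inter> sub_bidual e"
proof
  let ?E = "subtopology wstar (sub_bidual e)"
  fix m
  assume "m \<in> topcentre (sub_bidual e)"
  then have "m \<in> sub_bidual e" and "continuous_map ?E ?E (arens m)"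
    unfolding topcentre_def by simp_all
  moreover have "continuous_map wstar ?E (arens (kappa e))"
    by (rule continuous_map_into_subtopology[OF continuous_map_arens_kappa_left])
      (simp add: arens_kappa_in_sub_bidual)
  ultimately have "continuous_map wstar wstar (arens m \<circ> arens (kappa e))"
    using continuous_map_compose continuous_map_into_fulltopology by blast
  moreover have "arens m \<circ> arens (kappa e) = arens m"
    using arens_kappa_right_identity[OF assms] by (simp add: fun_eq_iff)
  ultimately show "m \<in> topcentre UNIV \<inter> sub_bidual e"
    using \<open>m \<in> sub_bidual e\<close> by (simp add: topcentre_UNIV)
qed

lemma topcentre_inter_sub_bidual_subset:
  "topcentre UNIV \<inter> sub_bidual e \<subseteq> topcentre (sub_bidual e)"
proof
  let ?E = "subtopology wstar (sub_bidual e)"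
  fix m
  assume "m \<in> topcentre UNIV \<inter> sub_bidual e"
  then have "m \<in> sub_bidual e" and "continuous_map wstar wstar (arens m)"
    by (simp_all add: topcentre_UNIV)
  then have "continuous_map ?E ?E (arens m)"
    by (intro continuous_map_into_subtopology continuous_map_from_subtopology)
      (auto intro: arens_sub_bidual_closed)
  then show "m \<in> topcentre (sub_bidual e)"
    using \<open>m \<in> sub_bidual e\<close> by (simp add: topcentre_def)
qed

theorem proposition5:
  fixes e :: "'a::{real_normed_algebra, banach}"
  assumes right_id: "\<forall>\<mu>::'a. \<mu> * e = \<mu>"
  shows "topcentre (sub_bidual e) = topcentre UNIV \<inter> sub_bidual e"
  using topcentre_sub_bidual_subset[OF right_id] topcentre_inter_sub_bidual_subset
  by (rule subset_antisym)

end
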